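(* Let $Z\in\mathbb{R}^{N\times k}$ have rows $\mathbf{z}_1^\top,\dots,\mathbf{z}_N^\top$ and let $\Pi=\{\pi_1,\dots,\pi_C\}$ be a partition of $[N]$ into $C\ge 2$ nonempty classes. For $\pi\in\Pi$ let $\boldsymbol{\mu}_\pi=\frac{1}{|\pi|}\sum_{i\in\pi}\mathbf{z}_i$ and $\boldsymbol{\mu}_\Pi=\frac1N\sum_{j=1}^N\mathbf{z}_j$, and define $$\mathcal{M}_{kms}(\Pi,Z)=\frac{\sum_{\pi\in\Pi}\sum_{i\in\pi}\|\mathbf{z}_i-\boldsymbol{\mu}_\pi\|^2}{\sum_{\pi\in\Pi}|\pi|\,\|\boldsymbol{\mu}_\pi-\boldsymbol{\mu}_\Pi\|^2}.$$ For distinct $\pi,\pi'\in\Pi$ let $\xi_{\pi\to\pi'}=\{i\in\pi:\|\mathbf{z}_i-\boldsymbol{\mu}_\pi\|_2\ge\|\mathbf{z}_i-\boldsymbol{\mu}_{\pi'}\|_2\}$ and assume $|\xi_{\pi\to\pi'}|>0$ for all such pairs. Define $\mathcal{E}_{\pi\to\pi'}=\frac{|\xi_{\pi\to\pi'}|}{|\pi'|+|\pi|}$ and $$\mathcal{E}_{\Pi,Z}=C(C-1)\Big/\sum_{\pi\ne\pi',\ \pi,\pi'\in\Pi}\frac{1}{\mathcal{E}_{\pi\to\pi'}}.$$ Then $\mathcal{E}_{\Pi,Z}=O(\mathcal{M}_{kms}(\Pi,Z))$.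
   Context: $\mathcal{E}_{\Pi,Z}$ is the harmonic mean of the pairwise clustering error ratios; $\mathcal{M}_{kms}$ is the ratio of the intra-class measure to the inter-class measure (assumed nonzero). The implied constant in $O(\cdot)$ depends only on $C$. *)

theory Defs
  imports Complex_Main "HOL-Library.Disjoint_Sets"
begin

text \<open>Points of R^k are represented as functions nat => real, only coordinates j < k
  matter. The data matrix Z is z :: nat => nat => real, row i is z i (for i < N).
  Indices of [N] are {..<N}.\<close>

definition sqnorm :: "nat \<Rightarrow> (nat \<Rightarrow> real) \<Rightarrow> real" where
  "sqnorm k x = (\<Sum>j<k. (x j)^2)"

definition enorm :: "nat \<Rightarrow> (nat \<Rightarrow> real) \<Rightarrow> real" where
  "enorm k x = sqrt (sqnorm k x)"

definition class_mean :: "(nat \<Rightarrow> nat \<Rightarrow> real) \<Rightarrow> nat set \<Rightarrow> nat \<Rightarrow> real" where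
  "class_mean z p = (\<lambda>j. (\<Sum>i\<in>p. z i j) / real (card p))"

definition global_mean :: "nat \<Rightarrow> (nat \<Rightarrow> nat \<Rightarrow> real) \<Rightarrow> nat \<Rightarrow> real" where
  "global_mean N z = (\<lambda>j. (\<Sum>i<N. z i j) / real N)"

definition intra_kms :: "nat \<Rightarrow> nat set set \<Rightarrow> (nat \<Rightarrow> nat \<Rightarrow> real) \<Rightarrow> real" where
  "intra_kms k P z = (\<Sum>p\<in>P. \<Sum>i\<in>p. sqnorm k (\<lambda>j. z i j - class_mean z p j))"

definition inter_kms :: "nat \<Rightarrow> nat \<Rightarrow> nat set set \<Rightarrow> (nat \<Rightarrow> nat \<Rightarrow> real) \<Rightarrow> real" where
  "inter_kms k N P z =
     (\<Sum>p\<in>P. real (card p) * sqnorm k (\<lambda>j. class_mean z p j - global_mean N z j))"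

definition M_kms :: "nat \<Rightarrow> nat \<Rightarrow> nat set set \<Rightarrow> (nat \<Rightarrow> nat \<Rightarrow> real) \<Rightarrow> real" where
  "M_kms k N P z = intra_kms k P z / inter_kms k N P z"

definition xi :: "nat \<Rightarrow> (nat \<Rightarrow> nat \<Rightarrow> real) \<Rightarrow> nat set \<Rightarrow> nat set \<Rightarrow> nat set" where
  "xi k z p p' = {i \<in> p. enorm k (\<lambda>j. z i j - class_mean z p j)
                         \<ge> enorm k (\<lambda>j. z i j - class_mean z p' j)}"

definition E_pair :: "nat \<Rightarrow> (nat \<Rightarrow> nat \<Rightarrow> real) \<Rightarrow> nat set \<Rightarrow> nat set \<Rightarrow> real" where
  "E_pair k z p p' = real (card (xi k z p p')) / (real (card p') + real (card p))"

definition E_Pi :: "nat \<Rightarrow> nat set set \<Rightarrow> (nat \<Rightarrow> nat \<Rightarrow> real) \<Rightarrow> real" where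
  "E_Pi k P z = real (card P) * (real (card P) - 1) /
     (\<Sum>(p, p')\<in>{(a, b). a \<in> P \<and> b \<in> P \<and> a \<noteq> b}. 1 / E_pair k z p p')"

end

theory Submission
  imports Defs "HOL-Analysis.L2_Norm" "HOL-Analysis.Convex"
begin

text \<open>A point of \<open>\<xi>\<^sub>\<pi>\<^sub>\<rightarrow>\<^sub>\<pi>\<^sub>'\<close> is at least as close to \<open>\<mu>\<^sub>\<pi>\<^sub>'\<close> as to \<open>\<mu>\<^sub>\<pi>\<close>, so by the triangle
  inequality \<open>\<parallel>\<mu>\<^sub>\<pi> - \<mu>\<^sub>\<pi>\<^sub>'\<parallel> \<le> 2\<parallel>z\<^sub>i - \<mu>\<^sub>\<pi>\<parallel>\<close>; summing over \<open>\<xi>\<^sub>\<pi>\<^sub>\<rightarrow>\<^sub>\<pi>\<^sub>'\<close> bounds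
  \<open>|\<xi>\<^sub>\<pi>\<^sub>\<rightarrow>\<^sub>\<pi>\<^sub>'| \<parallel>\<mu>\<^sub>\<pi> - \<mu>\<^sub>\<pi>\<^sub>'\<parallel>\<^sup>2\<close> by four times the intra-class measure. On the other side,
  the global mean is the size-weighted average of the class means, so by convexity of the square
  \<open>N\<close> times the inter-class measure is at most \<open>\<Sum>\<^sub>\<pi>\<^sub>\<noteq>\<^sub>\<pi>\<^sub>' |\<pi>||\<pi>'| \<parallel>\<mu>\<^sub>\<pi> - \<mu>\<^sub>\<pi>\<^sub>'\<parallel>\<^sup>2\<close>.
  As \<open>|\<pi>||\<pi>'| \<le> N(|\<pi>| + |\<pi>'|)\<close>, the two bounds combine to
  \<open>inter \<le> 4 intra \<Sum>\<^sub>\<pi>\<^sub>\<noteq>\<^sub>\<pi>\<^sub>' 1/\<E>\<^sub>\<pi>\<^sub>\<rightarrow>\<^sub>\<pi>\<^sub>'\<close>, that is \<open>\<E>\<^sub>\<Pi>\<^sub>,\<^sub>Z \<le> 4C(C - 1) \<M>\<^sub>k\<^sub>m\<^sub>s\<close>.\<close>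

abbreviation distinct_pairs :: "'a set \<Rightarrow> ('a \<times> 'a) set" where
  "distinct_pairs P \<equiv> {(a, b). a \<in> P \<and> b \<in> P \<and> a \<noteq> b}"

lemma sqnorm_nonneg: "0 \<le> sqnorm k x"
  unfolding sqnorm_def by (intro sum_nonneg) simp

lemma enorm_nonneg: "0 \<le> enorm k x"
  unfolding enorm_def by (simp add: sqnorm_nonneg)

lemma sqnorm_eq_enorm_square: "sqnorm k x = (enorm k x)\<^sup>2"
  unfolding enorm_def by (simp add: sqnorm_nonneg)

lemma enorm_eq_L2_set: "enorm k x = L2_set x {..<k}"
  unfolding enorm_def sqnorm_def L2_set_def by simp

lemma sqnorm_diff_le_if_closer:
  assumes "enorm k (\<lambda>j. a j - c j) \<le> enorm k (\<lambda>j. a j - b j)"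
  shows "sqnorm k (\<lambda>j. b j - c j) \<le> 4 * sqnorm k (\<lambda>j. a j - b j)"
proof -
  have "enorm k (\<lambda>j. b j - c j)
      \<le> L2_set (\<lambda>j. b j - a j) {..<k} + L2_set (\<lambda>j. a j - c j) {..<k}"
    using L2_set_triangle_ineq[of "\<lambda>j. b j - a j" "\<lambda>j. a j - c j" "{..<k}"]
    by (simp add: enorm_eq_L2_set)
  also have "L2_set (\<lambda>j. b j - a j) {..<k} = enorm k (\<lambda>j. a j - b j)"
    by (simp add: enorm_eq_L2_set L2_set_def power2_commute)
  finally have "enorm k (\<lambda>j. b j - c j) \<le> 2 * enorm k (\<lambda>j. a j - b j)"
    using assms by (simp add: enorm_eq_L2_set)
  then have "(enorm k (\<lambda>j. b j - c j))\<^sup>2 \<le> (2 * enorm k (\<lambda>j. a j - b j))\<^sup>2"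
    by (intro power_mono enorm_nonneg)
  then show ?thesis
    by (simp add: sqnorm_eq_enorm_square power_mult_distrib)
qed

lemma card_xi_mult_sqnorm_class_means_le:
  assumes "finite p"
  shows "real (card (xi k z p q)) * sqnorm k (\<lambda>j. class_mean z p j - class_mean z q j)
    \<le> 4 * (\<Sum>i\<in>p. sqnorm k (\<lambda>j. z i j - class_mean z p j))"
proof -
  have "real (card (xi k z p q)) * sqnorm k (\<lambda>j. class_mean z p j - class_mean z q j)
      = (\<Sum>i\<in>xi k z p q. sqnorm k (\<lambda>j. class_mean z p j - class_mean z q j))"
    by simp
  also have "\<dots> \<le> (\<Sum>i\<in>xi k z p q. 4 * sqnorm k (\<lambda>j. z i j - class_mean z p j))"
    by (intro sum_mono sqnorm_diff_le_if_closer) (simp add: xi_def)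
  also have "\<dots> \<le> (\<Sum>i\<in>p. 4 * sqnorm k (\<lambda>j. z i j - class_mean z p j))"
    using assms by (intro sum_mono2) (auto simp: xi_def sqnorm_nonneg)
  finally show ?thesis
    by (simp add: sum_distrib_left)
qed

lemma inter_kms_nonneg: "0 \<le> inter_kms k N P z"
  unfolding inter_kms_def by (intro sum_nonneg mult_nonneg_nonneg sqnorm_nonneg) simp

lemma intra_class_le_intra_kms:
  assumes "finite P" "p \<in> P"
  shows "(\<Sum>i\<in>p. sqnorm k (\<lambda>j. z i j - class_mean z p j)) \<le> intra_kms k P z"
  unfolding intra_kms_def using assms
  by (intro member_le_sum) (auto intro: sum_nonneg sqnorm_nonneg)

context
  fixes N :: nat and P :: "nat set set"
  assumes partition: "partition_on {..<N} P"
begin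

lemma finite_partition: "finite P"
  using finite_elements[OF finite_lessThan partition] .

lemma class_subset: "p \<in> P \<Longrightarrow> p \<subseteq> {..<N}"
  using partition_onD1[OF partition] by blast

lemma finite_class: "p \<in> P \<Longrightarrow> finite p"
  using class_subset finite_subset by blast

lemma card_class_pos: "p \<in> P \<Longrightarrow> 0 < card p"
  using partition_onD3[OF partition] finite_class card_gt_0_iff by blast

lemma card_class_le: "p \<in> P \<Longrightarrow> card p \<le> N"
  using card_mono[OF _ class_subset] by fastforce

lemma sum_over_classes: "(\<Sum>i<N. f i) = (\<Sum>p\<in>P. \<Sum>i\<in>p. f i)"
proof -
  have "(\<Sum>i<N. f i) = sum f (\<Union>P)"
    using partition_onD1[OF partition] by simp
  also have "\<dots> = (\<Sum>p\<in>P. \<Sum>i\<in>p. f i)"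
    using finite_class partition_onD2[OF partition]
    by (subst sum.Union_disjoint) (auto simp: pairwise_def disjnt_def)
  finally show ?thesis .
qed

lemma sum_card_classes: "(\<Sum>p\<in>P. real (card p)) = real N"
  using sum_over_classes[of "\<lambda>_. 1::real"] by simp

lemma N_pos: "P \<noteq> {} \<Longrightarrow> 0 < N"
  using card_class_pos card_class_le by fastforce

lemma global_mean_eq_weighted_class_means:
  "global_mean N z j = (\<Sum>q\<in>P. real (card q) / real N * class_mean z q j)"
proof -
  have "(\<Sum>i<N. z i j) = (\<Sum>q\<in>P. real (card q) * class_mean z q j)"
    unfolding sum_over_classes class_mean_def
    using card_class_pos by (intro sum.cong) auto
  then show ?thesis
    unfolding global_mean_def by (simp add: sum_divide_distrib)
qed

lemma sqnorm_class_mean_diff_global_mean_le: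
  assumes "p \<in> P"
  shows "sqnorm k (\<lambda>j. class_mean z p j - global_mean N z j)
    \<le> (\<Sum>q\<in>P. real (card q) / real N * sqnorm k (\<lambda>j. class_mean z p j - class_mean z q j))"
proof -
  define w where "w q = real (card q) / real N" for q :: "nat set"
  have w_sum: "(\<Sum>q\<in>P. w q) = 1"
    using N_pos assms by (auto simp: w_def sum_card_classes simp flip: sum_divide_distrib)
  have diff: "class_mean z p j - global_mean N z j
      = (\<Sum>q\<in>P. w q * (class_mean z p j - class_mean z q j))" for j
  proof -
    have "(\<Sum>q\<in>P. w q * (class_mean z p j - class_mean z q j))
        = (\<Sum>q\<in>P. w q) * class_mean z p j - (\<Sum>q\<in>P. w q * class_mean z q j)"
      by (simp add: right_diff_distrib sum_subtractf sum_distrib_right)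
    then show ?thesis
      by (simp add: w_sum global_mean_eq_weighted_class_means flip: w_def)
  qed
  have jensen: "(\<Sum>q\<in>P. w q * x q)\<^sup>2 \<le> (\<Sum>q\<in>P. w q * (x q)\<^sup>2)" for x
    using convex_on_sum[OF finite_partition _ convex_power_even[of 2] w_sum, of x] assms
    by (auto simp: w_def)
  have "sqnorm k (\<lambda>j. class_mean z p j - global_mean N z j)
      = (\<Sum>j<k. (\<Sum>q\<in>P. w q * (class_mean z p j - class_mean z q j))\<^sup>2)"
    unfolding sqnorm_def diff ..
  also have "\<dots> \<le> (\<Sum>j<k. \<Sum>q\<in>P. w q * (class_mean z p j - class_mean z q j)\<^sup>2)"
    by (intro sum_mono jensen)
  also have "\<dots> = (\<Sum>q\<in>P. w q * sqnorm k (\<lambda>j. class_mean z p j - class_mean z q j))"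
    unfolding sqnorm_def by (subst sum.swap) (simp add: sum_distrib_left)
  finally show ?thesis
    unfolding w_def .
qed

lemma inter_kms_le_sum_distinct_pairs:
  "real N * inter_kms k N P z
    \<le> (\<Sum>(p, q)\<in>distinct_pairs P.
          real (card p) * real (card q) * sqnorm k (\<lambda>j. class_mean z p j - class_mean z q j))"
proof -
  define D where "D p q = sqnorm k (\<lambda>j. class_mean z p j - class_mean z q j)" for p q
  have "real N * inter_kms k N P z
      = (\<Sum>p\<in>P. real (card p) * (real N * sqnorm k (\<lambda>j. class_mean z p j - global_mean N z j)))"
    unfolding inter_kms_def by (simp add: sum_distrib_left mult_ac)
  also have "\<dots> \<le> (\<Sum>p\<in>P. real (card p) * (\<Sum>q\<in>P. real (card q) * D p q))"
  proof (intro sum_mono mult_left_mono)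
    fix p assume "p \<in> P"
    then have "real N * sqnorm k (\<lambda>j. class_mean z p j - global_mean N z j)
        \<le> real N * (\<Sum>q\<in>P. real (card q) / real N * D p q)"
      unfolding D_def by (intro mult_left_mono sqnorm_class_mean_diff_global_mean_le) auto
    also have "\<dots> = (\<Sum>q\<in>P. real (card q) * D p q)"
    proof -
      have "N \<noteq> 0"
        using N_pos \<open>p \<in> P\<close> by blast
      then show ?thesis
        by (simp add: sum_distrib_left)
    qed
    finally show "real N * sqnorm k (\<lambda>j. class_mean z p j - global_mean N z j)
        \<le> (\<Sum>q\<in>P. real (card q) * D p q)" .
  qed simp
  also have "\<dots> = (\<Sum>(p, q)\<in>P \<times> P. real (card p) * real (card q) * D p q)"
    by (simp add: sum.cartesian_product sum_distrib_left mult_ac)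
  also have "\<dots> = (\<Sum>(p, q)\<in>distinct_pairs P. real (card p) * real (card q) * D p q)"
    by (rule sum.mono_neutral_right) (auto simp: D_def sqnorm_def finite_partition)
  finally show ?thesis
    unfolding D_def .
qed

lemma E_pair_pos:
  assumes "p \<in> P" "q \<in> P" "0 < card (xi k z p q)"
  shows "0 < E_pair k z p q"
  using assms card_class_pos unfolding E_pair_def by (simp add: add_pos_pos)

lemma class_sizes_mult_sqnorm_class_means_le:
  assumes "p \<in> P" "q \<in> P" "0 < card (xi k z p q)"
  shows "real (card p) * real (card q) * sqnorm k (\<lambda>j. class_mean z p j - class_mean z q j)
    \<le> 4 * real N * intra_kms k P z / E_pair k z p q"
proof -
  define D where "D = sqnorm k (\<lambda>j. class_mean z p j - class_mean z q j)"
  define X where "X = real (card (xi k z p q))"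
  define s where "s = real (card q) + real (card p)"
  have XD: "X * D \<le> 4 * intra_kms k P z"
    using card_xi_mult_sqnorm_class_means_le[OF finite_class[OF assms(1)], of k z q]
      intra_class_le_intra_kms[OF finite_partition assms(1), of k z]
    unfolding X_def D_def by linarith
  have "real (card p) * real (card q) \<le> real (card p) * real N"
    using card_class_le[OF assms(2)] by (intro mult_left_mono) auto
  then have sizes: "real (card p) * real (card q) \<le> real N * s"
    unfolding s_def by (simp add: distrib_left add_increasing mult.commute)
  have "real (card p) * real (card q) * D * X = real (card p) * real (card q) * (X * D)"
    by simp
  also have "\<dots> \<le> real N * s * (X * D)"
    using sizes by (intro mult_right_mono) (auto simp: X_def D_def sqnorm_nonneg)
  also have "\<dots> \<le> real N * s * (4 * intra_kms k P z)"
    using XD by (intro mult_left_mono) (auto simp: s_def)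
  finally have "real (card p) * real (card q) * D * X \<le> real N * s * (4 * intra_kms k P z)" .
  moreover have "0 < X"
    using assms(3) by (simp add: X_def)
  moreover have "4 * real N * intra_kms k P z / E_pair k z p q
      = real N * s * (4 * intra_kms k P z) / X"
    by (simp add: E_pair_def X_def s_def mult_ac)
  ultimately show ?thesis
    unfolding D_def[symmetric] by (simp add: pos_le_divide_eq)
qed

lemma inter_kms_le_intra_kms_mult_sum_inverse_E_pair:
  assumes "P \<noteq> {}" and xi_pos: "\<forall>p\<in>P. \<forall>q\<in>P. p \<noteq> q \<longrightarrow> 0 < card (xi k z p q)"
  shows "inter_kms k N P z
    \<le> 4 * intra_kms k P z * (\<Sum>(p, q)\<in>distinct_pairs P. 1 / E_pair k z p q)"
proof -
  have "real N * inter_kms k N P z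
      \<le> (\<Sum>(p, q)\<in>distinct_pairs P. 4 * real N * intra_kms k P z / E_pair k z p q)"
    using inter_kms_le_sum_distinct_pairs
    by (rule order_trans)
      (intro sum_mono, clarsimp simp: xi_pos class_sizes_mult_sqnorm_class_means_le)
  also have "\<dots> = real N * (4 * intra_kms k P z * (\<Sum>(p, q)\<in>distinct_pairs P. 1 / E_pair k z p q))"
    by (simp add: sum_distrib_left case_prod_unfold mult_ac)
  finally show ?thesis
    using N_pos[OF assms(1)] by simp
qed

lemma E_Pi_le_M_kms:
  assumes "2 \<le> card P" and xi_pos: "\<forall>p\<in>P. \<forall>q\<in>P. p \<noteq> q \<longrightarrow> 0 < card (xi k z p q)"
    and "inter_kms k N P z \<noteq> 0"
  shows "E_Pi k P z \<le> 4 * real (card P) * (real (card P) - 1) * M_kms k N P z"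
proof -
  define T where "T = (\<Sum>(p, q)\<in>distinct_pairs P. 1 / E_pair k z p q)"
  have "\<not> card P \<le> Suc 0"
    using assms(1) by simp
  then obtain a b where "a \<in> P" "b \<in> P" "a \<noteq> b"
    using card_le_Suc0_iff_eq[OF finite_partition] by blast
  have "finite (distinct_pairs P)"
    by (rule finite_subset[of _ "P \<times> P"]) (blast, simp add: finite_partition)
  moreover have "distinct_pairs P \<noteq> {}"
    using \<open>a \<in> P\<close> \<open>b \<in> P\<close> \<open>a \<noteq> b\<close> by (metis (mono_tags) case_prodI empty_iff mem_Collect_eq)
  moreover have "0 < E_pair k z p q" if "(p, q) \<in> distinct_pairs P" for p q
    using that by (intro E_pair_pos xi_pos[rule_format]) simp_all
  ultimately have "0 < T"
    unfolding T_def by (intro sum_pos; clarsimp)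
  have "0 < inter_kms k N P z"
    using inter_kms_nonneg assms(3) by (simp add: order_less_le)
  have "inter_kms k N P z \<le> 4 * intra_kms k P z * T"
    unfolding T_def using \<open>a \<in> P\<close>
    by (intro inter_kms_le_intra_kms_mult_sum_inverse_E_pair xi_pos) blast
  then have "1 / T \<le> 4 * (intra_kms k P z / inter_kms k N P z)"
    using \<open>0 < T\<close> \<open>0 < inter_kms k N P z\<close> by (simp add: field_simps)
  then have "real (card P) * (real (card P) - 1) * (1 / T)
      \<le> real (card P) * (real (card P) - 1) * (4 * (intra_kms k P z / inter_kms k N P z))"
    using assms(1) by (intro mult_left_mono) auto
  then show ?thesis
    by (simp add: E_Pi_def M_kms_def T_def mult_ac)
qed

end

theorem theorem2:
  fixes C :: nat
  assumes "C \<ge> 2"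
  shows "\<exists>K>0. \<forall>(N::nat) (k::nat) (z::nat \<Rightarrow> nat \<Rightarrow> real) (P::nat set set).
           partition_on {..<N} P \<and> card P = C
           \<and> (\<forall>p\<in>P. \<forall>p'\<in>P. p \<noteq> p' \<longrightarrow> card (xi k z p p') > 0)
           \<and> inter_kms k N P z \<noteq> 0
           \<longrightarrow> E_Pi k P z \<le> K * M_kms k N P z"
proof (intro exI[of _ "4 * real C * (real C - 1)"] conjI allI impI)
  show "0 < 4 * real C * (real C - 1)"
    using assms by simp
  fix N k z P
  assume "partition_on {..<N} P \<and> card P = C
    \<and> (\<forall>p\<in>P. \<forall>p'\<in>P. p \<noteq> p' \<longrightarrow> card (xi k z p p') > 0)
    \<and> inter_kms k N P z \<noteq> 0"
  then show "E_Pi k P z \<le> 4 * real C * (real C - 1) * M_kms k N P z"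
    using E_Pi_le_M_kms[of N P k z] assms by auto
qed

end
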